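(* Let $\{a_n\}_{n\in\mathbb{N}}\subset\mathbb{R}$ be a sequence satisfying $$|a_{n+m}|\le|a_n+a_m|\quad\text{for all } n,m\in\mathbb{N} \text{ with } \tfrac12 n\le m\le 2n.$$ Then the limit $\lim_{n\to\infty}\frac{a_n}{n}$ exists and belongs to $\mathbb{R}$.
   Context: $\mathbb{N}=\{1,2,3,\dots\}$. *)

theory Defs
  imports "HOL-Analysis.Analysis"
begin

end

theory Submission
  imports Defs
begin

text \<open>Put \<open>b n = \<bar>a n\<bar>\<close>; the hypothesis makes \<open>b\<close> subadditive on balanced pairs.
  Splitting \<open>n\<close> into two balanced blocks, one of them a multiple of a fixed \<open>k\<close>, gives
  \<open>b n \<le> (b k / k) n + O(k)\<close>, so as in Fekete's lemma \<open>b n / n\<close> tends to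
  \<open>l = inf\<^sub>k b k / k\<close>. If \<open>l > 0\<close>, then \<open>\<bar>a n\<bar> \<approx> l n\<close> for large \<open>n\<close>,
  and a sign change between \<open>a n\<close> and \<open>a (n + 1)\<close> would give
  \<open>\<bar>a (2n + 1)\<bar> \<le> max \<bar>a n\<bar> \<bar>a (n + 1)\<bar> \<approx> l n\<close>, contradicting \<open>\<bar>a (2n + 1)\<bar> \<approx> 2 l n\<close>;
  so \<open>a\<close> eventually has constant sign and \<open>a n / n\<close> tends to \<open>l\<close> or \<open>-l\<close>.\<close>

locale balanced_subadditive =
  fixes b :: "nat \<Rightarrow> real"
  assumes nonneg: "0 \<le> b n"
    and subadd: "\<And>n m. 1 \<le> n \<Longrightarrow> 1 \<le> m \<Longrightarrow> n \<le> 2 * m \<Longrightarrow> m \<le> 2 * n \<Longrightarrow>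
                   b (n + m) \<le> b n + b m"
begin

lemma mult_le: "1 \<le> j \<Longrightarrow> 1 \<le> k \<Longrightarrow> b (j * k) \<le> real j * b k"
proof (induction j rule: less_induct)
  case (less j)
  show ?case
  proof (cases "j = 1")
    case False
    define p where "p = j div 2"
    define q where "q = j - p"
    have pq: "1 \<le> p" "1 \<le> q" "p < j" "q < j" "p \<le> 2 * q" "q \<le> 2 * p" "p + q = j"
      using less.prems False unfolding p_def q_def by auto
    have "b (j * k) = b (p * k + q * k)"
      by (simp flip: pq(7) add: add_mult_distrib)
    also have "\<dots> \<le> b (p * k) + b (q * k)"
      using pq less.prems(2) by (intro subadd) (auto simp flip: mult.assoc)
    also have "\<dots> \<le> real p * b k + real q * b k"
      using less.IH pq less.prems(2) by (meson add_mono)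
    also have "\<dots> = real j * b k"
      by (simp flip: pq(7) add: algebra_simps)
    finally show ?thesis .
  qed simp
qed

lemma le_linear_bound:
  assumes "1 \<le> k"
  shows "1 \<le> n \<Longrightarrow> b n \<le> b k / real k * real n + 4 * b 1 * real k"
proof (induction n rule: less_induct)
  case (less n)
  have slope_nonneg: "0 \<le> b k / real k * real n"
    using nonneg by simp
  show ?case
  proof (cases "n < 4 * k")
    case True
    have "b n \<le> real n * b 1"
      using mult_le[of n 1] less.prems by simp
    also have "\<dots> \<le> 4 * b 1 * real k"
      using mult_right_mono[of "real n" "4 * real k" "b 1"] True nonneg[of 1] by (simp add: mult_ac)
    finally show ?thesis
      using slope_nonneg by linarith
  next
    case False
    define p where "p = n div (2 * k)"
    define m where "m = n - p * k"
    have "n = 2 * (p * k) + n mod (2 * k)" "n mod (2 * k) < 2 * k"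
      unfolding p_def using assms div_mult_mod_eq[of n "2 * k"] by (simp_all add: ac_simps)
    moreover have "2 * k \<le> p * k"
      unfolding p_def using False assms div_le_mono[of "4 * k" n "2 * k"] by simp
    ultimately have blocks: "1 \<le> p * k" "1 \<le> m" "p * k \<le> 2 * m" "m \<le> 2 * (p * k)"
      "m < n" "p * k + m = n"
      unfolding m_def using assms by linarith+
    have "b n \<le> b (p * k) + b m"
      using subadd[of "p * k" m] blocks by simp
    also have "b (p * k) \<le> b k / real k * real (p * k)"
      using mult_le[of p k] blocks assms by (simp add: field_simps)
    also have "b m \<le> b k / real k * real m + 4 * b 1 * real k"
      using less.IH blocks by simp
    finally show ?thesis
      by (simp flip: blocks(6) add: algebra_simps)
  qed
qed

theorem ratio_tendsto_Inf: "(\<lambda>n. b n / real n) \<longlonglongrightarrow> (INF k\<in>{1..}. b k / real k)"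
proof (rule order_tendstoI)
  let ?l = "INF k\<in>{1..}. b k / real k"
  have bdd: "bdd_below ((\<lambda>k. b k / real k) ` {1..})"
    using nonneg by (intro bdd_belowI2[of _ 0]) simp
  fix y assume "y < ?l"
  then have "y < b n / real n" if "1 \<le> n" for n
    using cINF_lower[OF bdd, of n] that by simp
  then show "\<forall>\<^sub>F n in sequentially. y < b n / real n"
    by (auto simp: eventually_sequentially)
next
  let ?l = "INF k\<in>{1..}. b k / real k"
  fix y assume "?l < y"
  then obtain k where k: "1 \<le> k" "b k / real k < y"
    by (subst (asm) cINF_less_iff) (use nonneg in \<open>auto intro: bdd_belowI2[of _ 0]\<close>)
  define D where "D = 4 * b 1 * real k"
  have "(\<lambda>n. b k / real k + D / real n) \<longlonglongrightarrow> b k / real k + 0"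
    by (intro tendsto_add tendsto_const lim_const_over_n)
  then have close: "\<forall>\<^sub>F n in sequentially. b k / real k + D / real n < y"
    using k(2) by (simp add: order_tendstoD(2))
  have bound: "b n / real n \<le> b k / real k + D / real n" if "1 \<le> n" for n
    using le_linear_bound[OF k(1) that] that unfolding D_def by (simp add: field_simps)
  show "\<forall>\<^sub>F n in sequentially. b n / real n < y"
    using close eventually_ge_at_top[of 1] by eventually_elim (use bound in fastforce)
qed

end

lemma tendsto_or_tendsto_uminus_of_tendsto_abs:
  fixes f :: "'a \<Rightarrow> real"
  assumes lim: "((\<lambda>x. \<bar>f x\<bar>) \<longlongrightarrow> l) F"
    and "(\<forall>\<^sub>F x in F. 0 \<le> f x) \<or> (\<forall>\<^sub>F x in F. f x \<le> 0)"
  shows "(f \<longlongrightarrow> l) F \<or> (f \<longlongrightarrow> - l) F"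
  using assms(2)
proof
  assume "\<forall>\<^sub>F x in F. 0 \<le> f x"
  then have "\<forall>\<^sub>F x in F. \<bar>f x\<bar> = f x"
    by (rule eventually_mono) simp
  with lim have "(f \<longlongrightarrow> l) F"
    by (rule Lim_transform_eventually)
  then show ?thesis ..
next
  assume "\<forall>\<^sub>F x in F. f x \<le> 0"
  then have "\<forall>\<^sub>F x in F. - \<bar>f x\<bar> = f x"
    by (rule eventually_mono) simp
  with tendsto_minus[OF lim] have "(f \<longlongrightarrow> - l) F"
    by (rule Lim_transform_eventually)
  then show ?thesis ..
qed

lemma balanced_subadditive_abs:
  fixes a :: "nat \<Rightarrow> real"
  assumes "\<And>n m. n \<ge> 1 \<Longrightarrow> m \<ge> 1 \<Longrightarrow> n \<le> 2 * m \<Longrightarrow> m \<le> 2 * n \<Longrightarrow>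
             \<bar>a (n + m)\<bar> \<le> \<bar>a n + a m\<bar>"
  shows "balanced_subadditive (\<lambda>n. \<bar>a n\<bar>)"
proof
  fix n m :: nat
  assume "1 \<le> n" "1 \<le> m" "n \<le> 2 * m" "m \<le> 2 * n"
  then show "\<bar>a (n + m)\<bar> \<le> \<bar>a n\<bar> + \<bar>a m\<bar>"
    using assms abs_triangle_ineq order.trans by meson
qed simp

lemma eventually_sign_constant:
  fixes a :: "nat \<Rightarrow> real"
  assumes hyp: "\<And>n m. n \<ge> 1 \<Longrightarrow> m \<ge> 1 \<Longrightarrow> n \<le> 2 * m \<Longrightarrow> m \<le> 2 * n \<Longrightarrow>
             \<bar>a (n + m)\<bar> \<le> \<bar>a n + a m\<bar>"
    and lim: "(\<lambda>n. \<bar>a n\<bar> / real n) \<longlonglongrightarrow> l" and "0 < l"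
  shows "(\<forall>\<^sub>F n in sequentially. 0 < a n) \<or> (\<forall>\<^sub>F n in sequentially. a n < 0)"
proof -
  have "\<forall>\<^sub>F n in sequentially. 3 * l / 4 < \<bar>a n\<bar> / real n \<and> \<bar>a n\<bar> / real n < 5 * l / 4"
    using lim \<open>0 < l\<close> by (intro eventually_conj order_tendstoD) auto
  then obtain N0 where N0: "\<And>n. N0 \<le> n \<Longrightarrow>
      3 * l / 4 < \<bar>a n\<bar> / real n \<and> \<bar>a n\<bar> / real n < 5 * l / 4"
    unfolding eventually_sequentially by blast
  define N where "N = max N0 2"
  have near: "3 * l / 4 * real n < \<bar>a n\<bar> \<and> \<bar>a n\<bar> < 5 * l / 4 * real n" if "N \<le> n" for n
    using N0[of n] that unfolding N_def by (simp add: field_simps)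
  have nonzero: "a n \<noteq> 0" if "N \<le> n" for n
  proof -
    have "0 < 3 * l / 4 * real n"
      using that \<open>0 < l\<close> unfolding N_def by simp
    then show ?thesis
      using near[OF that] by auto
  qed
  have same_sign: "0 < a n \<longleftrightarrow> 0 < a (Suc n)" if n: "N \<le> n" for n
  proof (rule ccontr)
    assume sign_change: "(0 < a n) \<noteq> (0 < a (Suc n))"
    have "3 * l / 4 * real (n + Suc n) < \<bar>a (n + Suc n)\<bar>"
      using near[of "n + Suc n"] n by simp
    also have "\<dots> \<le> \<bar>a n + a (Suc n)\<bar>"
      using hyp[of n "Suc n"] n unfolding N_def by simp
    also have "\<dots> \<le> max \<bar>a n\<bar> \<bar>a (Suc n)\<bar>"
      using sign_change nonzero[OF n] by auto
    also have "\<dots> < 5 * l / 4 * real (Suc n)"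
    proof -
      have "5 * l / 4 * real n \<le> 5 * l / 4 * real (Suc n)"
        using \<open>0 < l\<close> by simp
      then show ?thesis
        using near[OF n] near[OF le_SucI[OF n]] unfolding max_less_iff_conj by linarith
    qed
    finally have "l * (3 * real (n + Suc n)) < l * (5 * real (Suc n))"
      by (simp add: algebra_simps)
    then have "3 * real (n + Suc n) < 5 * real (Suc n)"
      using \<open>0 < l\<close> by simp
    then show False
      using n unfolding N_def by simp
  qed
  have sign: "0 < a n \<longleftrightarrow> 0 < a N" if "N \<le> n" for n
    using that by (induction n rule: dec_induct) (simp_all add: same_sign[symmetric])
  show ?thesis
  proof (cases "0 < a N")
    case True
    then show ?thesis
      using sign unfolding eventually_sequentially by blast
  next
    case False
    then show ?thesis
      using sign nonzero unfolding eventually_sequentially by (meson linorder_neqE)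
  qed
qed

theorem mainTheorem5:
  fixes a :: "nat \<Rightarrow> real"
  assumes "\<And>n m. n \<ge> 1 \<Longrightarrow> m \<ge> 1 \<Longrightarrow> n \<le> 2 * m \<Longrightarrow> m \<le> 2 * n \<Longrightarrow>
             \<bar>a (n + m)\<bar> \<le> \<bar>a n + a m\<bar>"
  shows "\<exists>L::real. (\<lambda>n. a n / real n) \<longlonglongrightarrow> L"
proof -
  define l where "l = (INF k\<in>{1..}. \<bar>a k\<bar> / real k)"
  have lim: "(\<lambda>n. \<bar>a n\<bar> / real n) \<longlonglongrightarrow> l"
    using balanced_subadditive.ratio_tendsto_Inf[OF balanced_subadditive_abs[of a, OF assms]]
    unfolding l_def .
  have "0 \<le> l"
    using tendsto_lowerbound[OF lim] by simp
  show ?thesis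
  proof (cases "l = 0")
    case True
    then have "(\<lambda>n. \<bar>a n / real n\<bar>) \<longlonglongrightarrow> 0"
      using lim by simp
    then have "(\<lambda>n. a n / real n) \<longlonglongrightarrow> 0"
      by (simp only: tendsto_rabs_zero_iff)
    then show ?thesis ..
  next
    case False
    with \<open>0 \<le> l\<close> have "0 < l"
      by simp
    with assms lim have "(\<forall>\<^sub>F n in sequentially. 0 < a n) \<or> (\<forall>\<^sub>F n in sequentially. a n < 0)"
      by (rule eventually_sign_constant)
    then have "(\<forall>\<^sub>F n in sequentially. 0 \<le> a n / real n) \<or>
        (\<forall>\<^sub>F n in sequentially. a n / real n \<le> 0)"
      by (metis (mono_tags, lifting) eventually_mono less_imp_le of_nat_0_le_iff
          divide_nonneg_nonneg divide_nonpos_nonneg)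
    then show ?thesis
      using tendsto_or_tendsto_uminus_of_tendsto_abs[of "\<lambda>n. a n / real n" l] lim by auto
  qed
qed

end
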